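(* Let $\mu:R\to S$ be a crossed module of racks. Then the induced group homomorphism ${\rm As}(\mu):{\rm As}(R)\to{\rm As}(S)$, together with the action of ${\rm As}(S)$ on ${\rm As}(R)$ by group automorphisms extending the given rack action of $S$ on $R$ (i.e. $i_R(r)\cdot i_S(s)=i_R(r\cdot s)$), is a crossed module of groups. In other words, the functor ${\rm As}$ sends crossed modules of racks to crossed modules of groups.
   Context: A (right) rack is a set with a binary operation $\lhd$ such that each $x\mapsto x\lhd y$ is bijective and $(x\lhd y)\lhd z=(x\lhd z)\lhd(y\lhd z)$. An action of a rack $R$ on a set $X$ is a family of bijections $x\mapsto x\cdot r$ ($r\in R$) with $(x\cdot r)\cdot r'=(x\cdot r')\cdot(r\lhd r')$; if $X$ is a rack, it is by automorphisms if also $(x\lhd x')\cdot r=(x\cdot r)\lhd(x'\cdot r)$. A crossed module of racks is a rack morphism $\mu:R\to S$ with an action of $S$ on $R$ by automorphisms such that $\mu(r\cdot s)=\mu(r)\lhd s$ and $r\cdot\mu(r')=r\lhd r'$ for all $r,r'\in R$, $s\in S$. For a rack $R$, the associated group ${\rm As}(R)$ is the quotient of the free group on the set $R$ by the normal subgroup generated by the elements $y^{-1}x^{-1}y(x\lhd y)$, $x,y\in R$, and $i_R:R\to{\rm As}(R)$ is the canonical map; a rack morphism $\mu:R\to S$ induces a group homomorphism ${\rm As}(\mu)$ with ${\rm As}(\mu)\circ i_R=i_S\circ\mu$. For a group $G$, the conjugation rack has $g\lhd h=h^{-1}gh$. A crossed module of groups is a group homomorphism $\mu:M\to N$ together with a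 right action of $N$ on $M$ by group automorphisms such that $\mu(m\cdot n)=n^{-1}\mu(m)n$ and $m\cdot\mu(m')=(m')^{-1}mm'$ for all $m,m'\in M$, $n\in N$. *)

theory Defs
  imports "HOL-Algebra.Group"
begin

definition is_rack :: "'a set \<Rightarrow> ('a \<Rightarrow> 'a \<Rightarrow> 'a) \<Rightarrow> bool" where
  "is_rack R op \<longleftrightarrow>
     (\<forall>x\<in>R. \<forall>y\<in>R. op x y \<in> R) \<and>
     (\<forall>y\<in>R. bij_betw (\<lambda>x. op x y) R R) \<and>
     (\<forall>x\<in>R. \<forall>y\<in>R. \<forall>z\<in>R. op (op x y) z = op (op x z) (op y z))"

definition rack_morphism ::
  "'a set \<Rightarrow> ('a \<Rightarrow> 'a \<Rightarrow> 'a) \<Rightarrow> 'b set \<Rightarrow> ('b \<Rightarrow> 'b \<Rightarrow> 'b) \<Rightarrow> ('a \<Rightarrow> 'b) \<Rightarrow> bool" where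
  "rack_morphism R opR S opS f \<longleftrightarrow>
     (\<forall>x\<in>R. f x \<in> S) \<and> (\<forall>x\<in>R. \<forall>y\<in>R. f (opR x y) = opS (f x) (f y))"

definition rack_action ::
  "'a set \<Rightarrow> ('a \<Rightarrow> 'a \<Rightarrow> 'a) \<Rightarrow> 'x set \<Rightarrow> ('x \<Rightarrow> 'a \<Rightarrow> 'x) \<Rightarrow> bool" where
  "rack_action R opR X act \<longleftrightarrow>
     (\<forall>r\<in>R. bij_betw (\<lambda>x. act x r) X X) \<and>
     (\<forall>x\<in>X. \<forall>r\<in>R. \<forall>r'\<in>R. act (act x r) r' = act (act x r') (opR r r'))"

definition rack_action_by_automorphisms ::
  "'a set \<Rightarrow> ('a \<Rightarrow> 'a \<Rightarrow> 'a) \<Rightarrow> 'x set \<Rightarrow> ('x \<Rightarrow> 'x \<Rightarrow> 'x) \<Rightarrow> ('x \<Rightarrow> 'a \<Rightarrow> 'x) \<Rightarrow> bool" where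
  "rack_action_by_automorphisms R opR X opX act \<longleftrightarrow>
     rack_action R opR X act \<and>
     (\<forall>x\<in>X. \<forall>x'\<in>X. \<forall>r\<in>R. act (opX x x') r = opX (act x r) (act x' r))"

definition rack_crossed_module ::
  "'r set \<Rightarrow> ('r \<Rightarrow> 'r \<Rightarrow> 'r) \<Rightarrow> 's set \<Rightarrow> ('s \<Rightarrow> 's \<Rightarrow> 's)
    \<Rightarrow> ('r \<Rightarrow> 's) \<Rightarrow> ('r \<Rightarrow> 's \<Rightarrow> 'r) \<Rightarrow> bool" where
  "rack_crossed_module R opR S opS \<mu> act \<longleftrightarrow>
     is_rack R opR \<and> is_rack S opS \<and>
     rack_morphism R opR S opS \<mu> \<and>
     rack_action_by_automorphisms S opS R opR act \<and>
     (\<forall>r\<in>R. \<forall>s\<in>S. \<mu> (act r s) = opS (\<mu> r) s) \<and>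
     (\<forall>r\<in>R. \<forall>r'\<in>R. act r (\<mu> r') = opR r r')"

text \<open>Words in the free group: lists of letters (x, True) = x and (x, False) = x^{-1}.
  As(R) is presented as the monoid on these letters modulo the congruence generated by
  x x^{-1} = 1, x^{-1} x = 1 and (x \<lhd> y) = y^{-1} x y, i.e. the quotient of the free
  group on R by the normal subgroup generated by y^{-1} x^{-1} y (x \<lhd> y).\<close>

inductive as_eq :: "'a set \<Rightarrow> ('a \<Rightarrow> 'a \<Rightarrow> 'a) \<Rightarrow> ('a \<times> bool) list \<Rightarrow> ('a \<times> bool) list \<Rightarrow> bool"
  for R op where
  as_refl: "as_eq R op w w"
| as_sym: "as_eq R op u w \<Longrightarrow> as_eq R op w u"
| as_trans: "as_eq R op u v \<Longrightarrow> as_eq R op v w \<Longrightarrow> as_eq R op u w"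
| as_cong: "as_eq R op u w \<Longrightarrow> as_eq R op (a @ u @ b) (a @ w @ b)"
| as_inv1: "x \<in> R \<Longrightarrow> as_eq R op [(x, True), (x, False)] []"
| as_inv2: "x \<in> R \<Longrightarrow> as_eq R op [(x, False), (x, True)] []"
| as_rel: "x \<in> R \<Longrightarrow> y \<in> R \<Longrightarrow>
     as_eq R op [(op x y, True)] [(y, False), (x, True), (y, True)]"

definition as_words :: "'a set \<Rightarrow> ('a \<times> bool) list set" where
  "as_words R = {w. set (map fst w) \<subseteq> R}"

definition as_class :: "'a set \<Rightarrow> ('a \<Rightarrow> 'a \<Rightarrow> 'a) \<Rightarrow> ('a \<times> bool) list \<Rightarrow> ('a \<times> bool) list set" where
  "as_class R op w = {u \<in> as_words R. as_eq R op w u}"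

definition As :: "'a set \<Rightarrow> ('a \<Rightarrow> 'a \<Rightarrow> 'a) \<Rightarrow> (('a \<times> bool) list set) monoid" where
  "As R op = \<lparr> carrier = as_class R op ` as_words R,
               mult = (\<lambda>A B. as_class R op ((SOME a. a \<in> A) @ (SOME b. b \<in> B))),
               one = as_class R op [] \<rparr>"

definition as_i :: "'a set \<Rightarrow> ('a \<Rightarrow> 'a \<Rightarrow> 'a) \<Rightarrow> 'a \<Rightarrow> ('a \<times> bool) list set" where
  "as_i R op x = as_class R op [(x, True)]"

definition As_map ::
  "'a set \<Rightarrow> ('a \<Rightarrow> 'a \<Rightarrow> 'a) \<Rightarrow> 'b set \<Rightarrow> ('b \<Rightarrow> 'b \<Rightarrow> 'b) \<Rightarrow> ('a \<Rightarrow> 'b)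
     \<Rightarrow> ('a \<times> bool) list set \<Rightarrow> ('b \<times> bool) list set" where
  "As_map R opR S opS f A =
     as_class S opS (map (\<lambda>(x, e). (f x, e)) (SOME a. a \<in> A))"

definition group_crossed_module ::
  "('m, 'c) monoid_scheme \<Rightarrow> ('n, 'd) monoid_scheme \<Rightarrow> ('m \<Rightarrow> 'n) \<Rightarrow> ('m \<Rightarrow> 'n \<Rightarrow> 'm) \<Rightarrow> bool" where
  "group_crossed_module M N \<mu> act \<longleftrightarrow>
     group M \<and> group N \<and> \<mu> \<in> hom M N \<and>
     (\<forall>n\<in>carrier N. (\<lambda>m. act m n) \<in> hom M M \<and> bij_betw (\<lambda>m. act m n) (carrier M) (carrier M)) \<and>
     (\<forall>m\<in>carrier M. act m \<one>\<^bsub>N\<^esub> = m) \<and>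
     (\<forall>m\<in>carrier M. \<forall>n\<in>carrier N. \<forall>n'\<in>carrier N.
        act (act m n) n' = act m (n \<otimes>\<^bsub>N\<^esub> n')) \<and>
     (\<forall>m\<in>carrier M. \<forall>n\<in>carrier N.
        \<mu> (act m n) = inv\<^bsub>N\<^esub> n \<otimes>\<^bsub>N\<^esub> \<mu> m \<otimes>\<^bsub>N\<^esub> n) \<and>
     (\<forall>m\<in>carrier M. \<forall>m'\<in>carrier M.
        act m (\<mu> m') = inv\<^bsub>M\<^esub> m' \<otimes>\<^bsub>M\<^esub> m \<otimes>\<^bsub>M\<^esub> m')"

end

theory Submission
  imports Defs
begin

text \<open>Relations of As are preserved by letterwise application of a rack morphism, so As is
  functorial. A word in S acts on R letter by letter, through a rack automorphism of R, and this
  only depends on its class in As(S): the action axiom (x \<cdot> s) \<cdot> s' = (x \<cdot> s') \<cdot> (s \<lhd> s') says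
  precisely that the relator of s \<lhd> s' acts trivially. Applying As to these automorphisms gives
  the action of As(S) on As(R). Both crossed module identities compare homomorphisms out of an As
  group, so on one side they reduce to generators, where they are the rack identities
  \<mu>(r \<cdot> s) = \<mu> r \<lhd> s and r \<cdot> \<mu> r' = r \<lhd> r' read through i(x \<lhd> y) = i(y)\<inverse> i(x) i(y); the other
  side is an induction over generators and their inverses.\<close>

lemma as_eq_words_iff:
  assumes "is_rack R op" "as_eq R op u w"
  shows "u \<in> as_words R \<longleftrightarrow> w \<in> as_words R"
  using assms(2)
proof induction
  case (as_rel x y) thus ?case using assms(1) by (auto simp: as_words_def is_rack_def)
qed (auto simp: as_words_def)

lemma as_words_append [simp]: "u @ w \<in> as_words R \<longleftrightarrow> u \<in> as_words R \<and> w \<in> as_words R"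
  by (auto simp: as_words_def)

lemma as_words_Cons [simp]: "l # w \<in> as_words R \<longleftrightarrow> fst l \<in> R \<and> w \<in> as_words R"
  by (auto simp: as_words_def)

lemma as_words_Nil [simp]: "[] \<in> as_words R"
  by (auto simp: as_words_def)

lemma as_eq_append: "as_eq R op u w \<Longrightarrow> as_eq R op u' w' \<Longrightarrow> as_eq R op (u @ u') (w @ w')"
  using as_cong[of R op u w "[]" u'] as_cong[of R op u' w' w "[]"] by (auto intro: as_trans)

lemma as_class_eqI: "as_eq R op u w \<Longrightarrow> as_class R op u = as_class R op w"
  unfolding as_class_def by (meson as_sym as_trans)

lemma some_in_as_class:
  assumes "w \<in> as_words R"
  shows "(SOME a. a \<in> as_class R op w) \<in> as_words R \<and> as_eq R op w (SOME a. a \<in> as_class R op w)"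
proof -
  have "w \<in> as_class R op w" using assms by (simp add: as_class_def as_refl)
  thus ?thesis using someI[of "\<lambda>a. a \<in> as_class R op w"] by (simp add: as_class_def)
qed

lemma As_carrier: "carrier (As R op) = as_class R op ` as_words R"
  by (simp add: As_def)

lemma As_one: "\<one>\<^bsub>As R op\<^esub> = as_class R op []"
  by (simp add: As_def)

lemma As_carrierE:
  assumes "m \<in> carrier (As R op)"
  obtains w where "w \<in> as_words R" "m = as_class R op w"
  using assms by (auto simp: As_carrier)

lemma as_class_in_carrier: "w \<in> as_words R \<Longrightarrow> as_class R op w \<in> carrier (As R op)"
  by (simp add: As_carrier)

lemma as_i_in_carrier: "x \<in> R \<Longrightarrow> as_i R op x \<in> carrier (As R op)"
  by (simp add: As_carrier as_i_def)

lemma As_mult: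
  assumes "u \<in> as_words R" "w \<in> as_words R"
  shows "as_class R op u \<otimes>\<^bsub>As R op\<^esub> as_class R op w = as_class R op (u @ w)"
proof -
  have "as_eq R op (u @ w) ((SOME a. a \<in> as_class R op u) @ (SOME a. a \<in> as_class R op w))"
    using some_in_as_class[OF assms(1)] some_in_as_class[OF assms(2)] by (blast intro: as_eq_append)
  thus ?thesis by (simp add: As_def as_class_eqI)
qed

definition word_inv :: "('a \<times> bool) list \<Rightarrow> ('a \<times> bool) list" where
  "word_inv w = rev (map (\<lambda>l. (fst l, \<not> snd l)) w)"

lemma word_inv_in_words [simp]: "word_inv w \<in> as_words R \<longleftrightarrow> w \<in> as_words R"
  by (auto simp: word_inv_def as_words_def image_image)

lemma as_eq_word_inv_append: "w \<in> as_words R \<Longrightarrow> as_eq R op (word_inv w @ w) []"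
proof (induction w)
  case Nil thus ?case by (simp add: word_inv_def as_refl)
next
  case (Cons l w)
  obtain x e where l: "l = (x, e)" by (cases l)
  have "as_eq R op [(x, \<not> e), (x, e)] []"
    using Cons.prems l by (cases e) (auto intro: as_inv1 as_inv2)
  hence "as_eq R op (word_inv w @ [(x, \<not> e), (x, e)] @ w) (word_inv w @ [] @ w)"
    by (rule as_cong)
  hence "as_eq R op (word_inv (l # w) @ l # w) (word_inv w @ w)"
    by (simp add: word_inv_def l)
  thus ?case using Cons by (meson as_trans as_words_Cons)
qed

lemma As_group: "group (As R op)"
proof (rule groupI)
  fix m assume "m \<in> carrier (As R op)"
  then obtain w where w: "w \<in> as_words R" "m = as_class R op w" by (rule As_carrierE)
  show "\<exists>m'\<in>carrier (As R op). m' \<otimes>\<^bsub>As R op\<^esub> m = \<one>\<^bsub>As R op\<^esub>"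
    using w as_eq_word_inv_append[OF w(1), of op]
    by (intro bexI[of _ "as_class R op (word_inv w)"])
       (auto simp: As_carrier As_mult As_one as_class_eqI)
qed (auto simp: As_carrier As_mult As_one)

lemma As_inv:
  assumes "w \<in> as_words R"
  shows "inv\<^bsub>As R op\<^esub> (as_class R op w) = as_class R op (word_inv w)"
proof -
  interpret group "As R op" by (rule As_group)
  show ?thesis
    using as_eq_word_inv_append[OF assms, of op] assms
    by (intro inv_equality) (auto simp: As_carrier As_mult As_one as_class_eqI)
qed

lemma as_class_letter:
  assumes "x \<in> R"
  shows "as_class R op [(x, e)] = (if e then as_i R op x else inv\<^bsub>As R op\<^esub> (as_i R op x))"
  using As_inv[of "[(x, True)]" R op] assms by (simp add: as_i_def word_inv_def)

lemma as_class_Cons: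
  "fst l \<in> R \<Longrightarrow> w \<in> as_words R \<Longrightarrow>
     as_class R op (l # w) = as_class R op [l] \<otimes>\<^bsub>As R op\<^esub> as_class R op w"
  using As_mult[of "[l]" R w op] by simp

lemma as_i_rel:
  assumes "x \<in> R" "y \<in> R"
  shows "as_i R op (op x y) =
           inv\<^bsub>As R op\<^esub> as_i R op y \<otimes>\<^bsub>As R op\<^esub> as_i R op x \<otimes>\<^bsub>As R op\<^esub> as_i R op y"
proof -
  have "as_i R op (op x y) = as_class R op [(y, False), (x, True), (y, True)]"
    unfolding as_i_def by (rule as_class_eqI) (rule as_rel[OF assms])
  also have "\<dots> = as_class R op [(y, False)] \<otimes>\<^bsub>As R op\<^esub> as_class R op [(x, True)]
                      \<otimes>\<^bsub>As R op\<^esub> as_class R op [(y, True)]"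
    using assms by (simp add: As_mult)
  finally show ?thesis
    using assms by (simp add: as_class_letter)
qed

lemma As_induct [consumes 1, case_names one gen inv_gen]:
  assumes "m \<in> carrier (As R op)"
    and "P \<one>\<^bsub>As R op\<^esub>"
    and gen: "\<And>x a. x \<in> R \<Longrightarrow> a \<in> carrier (As R op) \<Longrightarrow> P a \<Longrightarrow>
                P (as_i R op x \<otimes>\<^bsub>As R op\<^esub> a)"
    and inv_gen: "\<And>x a. x \<in> R \<Longrightarrow> a \<in> carrier (As R op) \<Longrightarrow> P a \<Longrightarrow>
                P (inv\<^bsub>As R op\<^esub> as_i R op x \<otimes>\<^bsub>As R op\<^esub> a)"
  shows "P m"
proof -
  obtain w where w: "w \<in> as_words R" "m = as_class R op w"
    using assms(1) by (rule As_carrierE)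
  have "P (as_class R op w)" using w(1)
  proof (induction w)
    case Nil thus ?case using assms(2) by (simp add: As_one)
  next
    case (Cons l w)
    obtain x e where l: "l = (x, e)" by (cases l)
    have x: "x \<in> R" and w: "w \<in> as_words R" using Cons.prems l by auto
    show ?case
      using gen[OF x _ Cons.IH[OF w]] inv_gen[OF x _ Cons.IH[OF w]] as_class_Cons[of l R w op]
      by (cases e) (simp_all add: l x w as_class_letter as_class_in_carrier)
  qed
  thus ?thesis using w(2) by simp
qed

lemma As_hom_eqI:
  assumes "group G" "h \<in> hom (As R op) G" "k \<in> hom (As R op) G"
    and "\<And>x. x \<in> R \<Longrightarrow> h (as_i R op x) = k (as_i R op x)"
    and "m \<in> carrier (As R op)"
  shows "h m = k m"
proof -
  interpret h: group_hom "As R op" G h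
    using assms(1,2) by (simp add: group_hom_def group_hom_axioms_def As_group)
  interpret k: group_hom "As R op" G k
    using assms(1,3) by (simp add: group_hom_def group_hom_axioms_def As_group)
  show ?thesis
    using assms(5)
    by (induction rule: As_induct) (simp_all add: as_i_in_carrier assms(4))
qed

lemma as_eq_map:
  assumes "rack_morphism R opR S opS f" "as_eq R opR u w"
  shows "as_eq S opS (map (\<lambda>(x, e). (f x, e)) u) (map (\<lambda>(x, e). (f x, e)) w)"
  using assms(2)
proof induction
  case (as_sym u w) thus ?case by (blast intro: as_eq.as_sym)
next
  case (as_trans u v w) thus ?case by (blast intro: as_eq.as_trans)
next
  case (as_cong u w a b) thus ?case using as_eq.as_cong by fastforce
qed (use assms(1) in \<open>auto simp: rack_morphism_def intro: as_eq.intros\<close>)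

lemma map_letters_in_words:
  "rack_morphism R opR S opS f \<Longrightarrow> u \<in> as_words R \<Longrightarrow> map (\<lambda>(x, e). (f x, e)) u \<in> as_words S"
  by (auto simp: rack_morphism_def as_words_def)

lemma As_map_class:
  assumes "rack_morphism R opR S opS f" "u \<in> as_words R"
  shows "As_map R opR S opS f (as_class R opR u) = as_class S opS (map (\<lambda>(x, e). (f x, e)) u)"
  unfolding As_map_def
  using some_in_as_class[OF assms(2), of opR] as_eq_map[OF assms(1)]
  by (metis as_class_eqI as_sym)

lemma As_map_as_i:
  "rack_morphism R opR S opS f \<Longrightarrow> x \<in> R \<Longrightarrow> As_map R opR S opS f (as_i R opR x) = as_i S opS (f x)"
  by (simp add: as_i_def As_map_class)

lemma As_map_hom:
  assumes "rack_morphism R opR S opS f"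
  shows "As_map R opR S opS f \<in> hom (As R opR) (As S opS)"
  by (rule homI)
     (auto simp: As_carrier As_mult As_map_class[OF assms] map_letters_in_words[OF assms])

lemma As_map_cong:
  assumes "rack_morphism R opR S opS f" "rack_morphism R opR S opS g"
    and "\<And>x. x \<in> R \<Longrightarrow> f x = g x" "m \<in> carrier (As R opR)"
  shows "As_map R opR S opS f m = As_map R opR S opS g m"
proof -
  obtain u where u: "u \<in> as_words R" "m = as_class R opR u" using assms(4) by (rule As_carrierE)
  have "map (\<lambda>(x, e). (f x, e)) u = map (\<lambda>(x, e). (g x, e)) u"
    using u(1) assms(3) by (intro map_cong) (auto simp: as_words_def)
  thus ?thesis
    unfolding u(2) by (simp only: As_map_class assms(1,2) u(1))
qed

lemma As_map_id:
  "m \<in> carrier (As R op) \<Longrightarrow> As_map R op R op (\<lambda>x. x) m = m"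
  by (elim As_carrierE) (simp add: As_map_class rack_morphism_def)

lemma As_map_comp:
  assumes "rack_morphism R opR S opS f" "rack_morphism S opS T opT g" "m \<in> carrier (As R opR)"
  shows "As_map S opS T opT g (As_map R opR S opS f m) = As_map R opR T opT (\<lambda>x. g (f x)) m"
proof -
  have "rack_morphism R opR T opT (\<lambda>x. g (f x))"
    using assms(1,2) by (simp add: rack_morphism_def)
  thus ?thesis
    using assms(3)
    by (elim As_carrierE)
       (simp add: As_map_class assms(1,2) map_letters_in_words[OF assms(1)],
        simp add: split_def comp_def)
qed

lemma (in group) conj_mult:
  "a \<in> carrier G \<Longrightarrow> b \<in> carrier G \<Longrightarrow> n \<in> carrier G \<Longrightarrow>
     (inv n \<otimes> a \<otimes> n) \<otimes> (inv n \<otimes> b \<otimes> n) = inv n \<otimes> (a \<otimes> b) \<otimes> n"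
  by (simp add: m_assoc flip: m_assoc[of n "inv n"])

lemma (in group) conj_hom: "n \<in> carrier G \<Longrightarrow> (\<lambda>a. inv n \<otimes> a \<otimes> n) \<in> hom G G"
  by (rule homI) (simp_all add: conj_mult)

lemma (in group) conj_mult_right:
  "a \<in> carrier G \<Longrightarrow> m \<in> carrier G \<Longrightarrow> n \<in> carrier G \<Longrightarrow>
     inv (m \<otimes> n) \<otimes> a \<otimes> (m \<otimes> n) = inv n \<otimes> (inv m \<otimes> a \<otimes> m) \<otimes> n"
  by (simp add: inv_mult_group m_assoc)

lemma (in group) conj_inv_cancel:
  "a \<in> carrier G \<Longrightarrow> y \<in> carrier G \<Longrightarrow> g \<in> carrier G \<Longrightarrow>
     inv g \<otimes> y \<otimes> g = a \<Longrightarrow> y = inv (inv g) \<otimes> a \<otimes> inv g"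
  by (auto simp: m_assoc simp flip: m_assoc[of g "inv g"])

locale rack_automorphism_action =
  fixes R :: "'r set" and opR :: "'r \<Rightarrow> 'r \<Rightarrow> 'r"
    and S :: "'s set" and opS :: "'s \<Rightarrow> 's \<Rightarrow> 's"
    and act :: "'r \<Rightarrow> 's \<Rightarrow> 'r"
  assumes rack_R: "is_rack R opR" and rack_S: "is_rack S opS"
    and action: "rack_action_by_automorphisms S opS R opR act"
begin

lemma act_bij: "s \<in> S \<Longrightarrow> bij_betw (\<lambda>x. act x s) R R"
  using action by (simp add: rack_action_by_automorphisms_def rack_action_def)

lemma act_closed: "r \<in> R \<Longrightarrow> s \<in> S \<Longrightarrow> act r s \<in> R"
  using act_bij bij_betw_apply by fastforce

lemma act_act: "r \<in> R \<Longrightarrow> s \<in> S \<Longrightarrow> s' \<in> S \<Longrightarrow> act (act r s) s' = act (act r s') (opS s s')"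
  using action by (simp add: rack_action_by_automorphisms_def rack_action_def)

lemma act_op: "x \<in> R \<Longrightarrow> y \<in> R \<Longrightarrow> s \<in> S \<Longrightarrow> act (opR x y) s = opR (act x s) (act y s)"
  using action by (simp add: rack_action_by_automorphisms_def)

lemma opR_closed: "x \<in> R \<Longrightarrow> y \<in> R \<Longrightarrow> opR x y \<in> R"
  using rack_R by (simp add: is_rack_def)

definition act_inv :: "'r \<Rightarrow> 's \<Rightarrow> 'r" where
  "act_inv r s = inv_into R (\<lambda>x. act x s) r"

lemma act_inv_closed: "r \<in> R \<Longrightarrow> s \<in> S \<Longrightarrow> act_inv r s \<in> R"
  unfolding act_inv_def using act_bij bij_betw_inv_into bij_betw_apply by metis

lemma act_act_inv: "r \<in> R \<Longrightarrow> s \<in> S \<Longrightarrow> act (act_inv r s) s = r"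
  unfolding act_inv_def using act_bij bij_betw_imp_surj_on f_inv_into_f by metis

lemma act_inv_act: "r \<in> R \<Longrightarrow> s \<in> S \<Longrightarrow> act_inv (act r s) s = r"
  unfolding act_inv_def using act_bij bij_betw_imp_inj_on inv_into_f_f by metis

lemma act_inv_op:
  assumes "x \<in> R" "y \<in> R" "s \<in> S"
  shows "act_inv (opR x y) s = opR (act_inv x s) (act_inv y s)"
proof -
  have "opR x y = act (opR (act_inv x s) (act_inv y s)) s"
    using assms by (simp add: act_op act_inv_closed act_act_inv)
  thus ?thesis using assms by (simp add: act_inv_act act_inv_closed opR_closed)
qed

definition act_word :: "'r \<Rightarrow> ('s \<times> bool) list \<Rightarrow> 'r" where
  "act_word r v = foldl (\<lambda>r (s, e). if e then act r s else act_inv r s) r v"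

lemma act_word_Nil [simp]: "act_word r [] = r"
  and act_word_Cons [simp]: "act_word r ((s, e) # v) = act_word (if e then act r s else act_inv r s) v"
  and act_word_append: "act_word r (u @ v) = act_word (act_word r u) v"
  by (simp_all add: act_word_def)

lemma act_word_closed: "r \<in> R \<Longrightarrow> v \<in> as_words S \<Longrightarrow> act_word r v \<in> R"
  by (induction v arbitrary: r) (auto simp: act_closed act_inv_closed)

lemma act_word_op:
  "x \<in> R \<Longrightarrow> y \<in> R \<Longrightarrow> v \<in> as_words S \<Longrightarrow> act_word (opR x y) v = opR (act_word x v) (act_word y v)"
  by (induction v arbitrary: x y)
     (auto simp: act_op act_inv_op act_closed act_inv_closed)

lemma rack_morphism_act_word: "v \<in> as_words S \<Longrightarrow> rack_morphism R opR R opR (\<lambda>x. act_word x v)"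
  by (simp add: rack_morphism_def act_word_closed act_word_op)

lemma act_word_as_eq:
  "as_eq S opS v v' \<Longrightarrow> v \<in> as_words S \<Longrightarrow> v' \<in> as_words S \<Longrightarrow> r \<in> R \<Longrightarrow> act_word r v = act_word r v'"
proof (induction arbitrary: r rule: as_eq.induct)
  case (as_sym u w) thus ?case by simp
next
  case (as_trans u v w)
  \<comment> \<open>the middle word is a word over S only because S is closed under opS\<close>
  thus ?case using as_eq_words_iff[OF rack_S as_trans.hyps(1)] by simp
next
  case (as_cong u w a b)
  thus ?case by (simp add: act_word_append act_word_closed)
next
  case (as_inv1 x) thus ?case by (simp add: act_inv_act)
next
  case (as_inv2 x) thus ?case by (simp add: act_act_inv)
next
  case (as_rel x y)
  thus ?case by (simp add: act_act act_inv_closed act_act_inv)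
qed simp

definition As_action :: "('r \<times> bool) list set \<Rightarrow> ('s \<times> bool) list set \<Rightarrow> ('r \<times> bool) list set" where
  "As_action m n = As_map R opR R opR (\<lambda>x. act_word x (SOME v. v \<in> n)) m"

lemma As_action_class:
  assumes "m \<in> carrier (As R opR)" "v \<in> as_words S"
  shows "As_action m (as_class S opS v) = As_map R opR R opR (\<lambda>x. act_word x v) m"
proof -
  define v' where "v' = (SOME v'. v' \<in> as_class S opS v)"
  have v': "v' \<in> as_words S" "as_eq S opS v v'"
    using some_in_as_class[OF assms(2)] by (auto simp: v'_def)
  have "\<And>x. x \<in> R \<Longrightarrow> act_word x v' = act_word x v"
    using act_word_as_eq[OF as_sym[OF v'(2)] v'(1) assms(2)] .
  thus ?thesis
    unfolding As_action_def v'_def[symmetric]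
    using assms by (intro As_map_cong) (simp_all add: rack_morphism_act_word v')
qed


lemma As_action_hom:
  assumes "n \<in> carrier (As S opS)"
  shows "(\<lambda>m. As_action m n) \<in> hom (As R opR) (As R opR)"
proof -
  obtain v where v: "v \<in> as_words S" "n = as_class S opS v"
    using assms by (rule As_carrierE)
  show ?thesis
    using As_map_hom[OF rack_morphism_act_word[OF v(1)]]
    by (rule group.hom_restrict[OF As_group]) (simp add: As_action_class v)
qed

lemma As_action_closed:
  "m \<in> carrier (As R opR) \<Longrightarrow> n \<in> carrier (As S opS) \<Longrightarrow> As_action m n \<in> carrier (As R opR)"
  using hom_in_carrier[OF As_action_hom] .

lemma As_action_one: "m \<in> carrier (As R opR) \<Longrightarrow> As_action m \<one>\<^bsub>As S opS\<^esub> = m"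
  by (simp add: As_one As_action_class As_map_id)

lemma As_action_mult:
  assumes "m \<in> carrier (As R opR)" "n \<in> carrier (As S opS)" "n' \<in> carrier (As S opS)"
  shows "As_action (As_action m n) n' = As_action m (n \<otimes>\<^bsub>As S opS\<^esub> n')"
  using assms(2,3)
proof (elim As_carrierE)
  fix v v' assume v: "v \<in> as_words S" "n = as_class S opS v"
    and v': "v' \<in> as_words S" "n' = as_class S opS v'"
  have "As_action m n \<in> carrier (As R opR)"
    using assms(1,2) by (rule As_action_closed)
  thus ?thesis
    using assms(1)
    by (simp add: v v' As_action_class As_mult As_map_comp rack_morphism_act_word act_word_append)
qed

lemma As_action_bij:
  assumes "n \<in> carrier (As S opS)"
  shows "bij_betw (\<lambda>m. As_action m n) (carrier (As R opR)) (carrier (As R opR))"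
proof -
  interpret AsS: group "As S opS" by (rule As_group)
  show ?thesis
    using assms
    by (intro bij_betw_byWitness[where f' = "\<lambda>m. As_action m (inv\<^bsub>As S opS\<^esub> n)"])
       (auto simp: As_action_mult As_action_one As_action_closed)
qed

lemma As_action_as_i:
  assumes "r \<in> R" "s \<in> S"
  shows "As_action (as_i R opR r) (as_i S opS s) = as_i R opR (act r s)"
  using As_action_class[OF as_i_in_carrier[OF assms(1)], of "[(s, True)]"]
    As_map_as_i[OF rack_morphism_act_word[of "[(s, True)]"] assms(1)] assms
  by (simp add: as_i_def)

end

locale crossed_module_of_racks = rack_automorphism_action R opR S opS act
  for R :: "'r set" and opR and S :: "'s set" and opS and act +
  fixes \<mu> :: "'r \<Rightarrow> 's"
  assumes morphism: "rack_morphism R opR S opS \<mu>"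
    and \<mu>_act: "r \<in> R \<Longrightarrow> s \<in> S \<Longrightarrow> \<mu> (act r s) = opS (\<mu> r) s"
    and act_\<mu>: "r \<in> R \<Longrightarrow> r' \<in> R \<Longrightarrow> act r (\<mu> r') = opR r r'"
begin

abbreviation "AsR \<equiv> As R opR"
abbreviation "AsS \<equiv> As S opS"
abbreviation "iR \<equiv> as_i R opR"
abbreviation "iS \<equiv> as_i S opS"
abbreviation "As_\<mu> \<equiv> As_map R opR S opS \<mu>"

sublocale AsR: group AsR by (rule As_group)
sublocale AsS: group AsS by (rule As_group)
sublocale As_\<mu>: group_hom AsR AsS As_\<mu>
  by (simp add: group_hom_def group_hom_axioms_def As_group As_map_hom[OF morphism])

lemma \<mu>_closed: "r \<in> R \<Longrightarrow> \<mu> r \<in> S"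
  using morphism by (simp add: rack_morphism_def)

lemma As_\<mu>_as_i: "r \<in> R \<Longrightarrow> As_\<mu> (iR r) = iS (\<mu> r)"
  by (rule As_map_as_i[OF morphism])

lemma As_\<mu>_As_action_gen:
  assumes "s \<in> S" "m \<in> carrier AsR"
  shows "As_\<mu> (As_action m (iS s)) = inv\<^bsub>AsS\<^esub> iS s \<otimes>\<^bsub>AsS\<^esub> As_\<mu> m \<otimes>\<^bsub>AsS\<^esub> iS s"
proof -
  have s: "iS s \<in> carrier AsS" using assms(1) by (rule as_i_in_carrier)
  interpret A: group_hom AsR AsR "\<lambda>m. As_action m (iS s)"
    using As_action_hom[OF s] by (simp add: group_hom_def group_hom_axioms_def As_group)
  show ?thesis
  proof (rule As_hom_eqI[OF As_group _ _ _ assms(2)])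
    show "(\<lambda>m. As_\<mu> (As_action m (iS s))) \<in> hom AsR AsS"
      by (rule homI) simp_all
    show "(\<lambda>m. inv\<^bsub>AsS\<^esub> iS s \<otimes>\<^bsub>AsS\<^esub> As_\<mu> m \<otimes>\<^bsub>AsS\<^esub> iS s) \<in> hom AsR AsS"
      by (rule homI) (simp_all add: s AsS.conj_mult)
  next
    fix r assume r: "r \<in> R"
    have "As_\<mu> (As_action (iR r) (iS s)) = iS (opS (\<mu> r) s)"
      using r assms(1) by (simp add: As_action_as_i As_\<mu>_as_i act_closed \<mu>_act)
    thus "As_\<mu> (As_action (iR r) (iS s)) = inv\<^bsub>AsS\<^esub> iS s \<otimes>\<^bsub>AsS\<^esub> As_\<mu> (iR r) \<otimes>\<^bsub>AsS\<^esub> iS s"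
      using r assms(1) by (simp add: as_i_rel \<mu>_closed As_\<mu>_as_i)
  qed
qed

lemma As_\<mu>_As_action:
  assumes "n \<in> carrier AsS" "m \<in> carrier AsR"
  shows "As_\<mu> (As_action m n) = inv\<^bsub>AsS\<^esub> n \<otimes>\<^bsub>AsS\<^esub> As_\<mu> m \<otimes>\<^bsub>AsS\<^esub> n"
  using assms
proof (induction n arbitrary: m rule: As_induct)
  case one thus ?case by (simp add: As_action_one)
next
  case (gen s n)
  have s: "iS s \<in> carrier AsS" using gen.hyps(1) by (rule as_i_in_carrier)
  have "As_action m (iS s \<otimes>\<^bsub>AsS\<^esub> n) = As_action (As_action m (iS s)) n"
    using gen s by (simp add: As_action_mult)
  thus ?case
    using gen s by (simp add: As_action_closed gen.IH As_\<mu>_As_action_gen AsS.conj_mult_right)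
next
  case (inv_gen s n)
  have s: "iS s \<in> carrier AsS" using inv_gen.hyps(1) by (rule as_i_in_carrier)
  have "As_\<mu> (As_action m (inv\<^bsub>AsS\<^esub> iS s)) =
          inv\<^bsub>AsS\<^esub> (inv\<^bsub>AsS\<^esub> iS s) \<otimes>\<^bsub>AsS\<^esub> As_\<mu> m \<otimes>\<^bsub>AsS\<^esub> inv\<^bsub>AsS\<^esub> iS s"
    by (rule AsS.conj_inv_cancel)
       (use inv_gen s in \<open>simp_all add: As_action_closed As_\<mu>_As_action_gen[symmetric]
                                         As_action_mult As_action_one\<close>)
  moreover have "As_action m (inv\<^bsub>AsS\<^esub> iS s \<otimes>\<^bsub>AsS\<^esub> n) =
                   As_action (As_action m (inv\<^bsub>AsS\<^esub> iS s)) n"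
    using inv_gen s by (simp add: As_action_mult)
  ultimately show ?case
    using inv_gen s by (simp add: As_action_closed inv_gen.IH AsS.conj_mult_right)
qed

lemma As_action_As_\<mu>_gen:
  assumes "r \<in> R" "m \<in> carrier AsR"
  shows "As_action m (iS (\<mu> r)) = inv\<^bsub>AsR\<^esub> iR r \<otimes>\<^bsub>AsR\<^esub> m \<otimes>\<^bsub>AsR\<^esub> iR r"
proof (rule As_hom_eqI[OF As_group _ _ _ assms(2)])
  show "(\<lambda>m. As_action m (iS (\<mu> r))) \<in> hom AsR AsR"
    using assms(1) by (simp add: As_action_hom as_i_in_carrier \<mu>_closed)
  show "(\<lambda>m. inv\<^bsub>AsR\<^esub> iR r \<otimes>\<^bsub>AsR\<^esub> m \<otimes>\<^bsub>AsR\<^esub> iR r) \<in> hom AsR AsR"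
    using assms(1) by (simp add: AsR.conj_hom as_i_in_carrier)
next
  fix x assume "x \<in> R"
  thus "As_action (iR x) (iS (\<mu> r)) = inv\<^bsub>AsR\<^esub> iR r \<otimes>\<^bsub>AsR\<^esub> iR x \<otimes>\<^bsub>AsR\<^esub> iR r"
    using assms(1) by (simp add: As_action_as_i \<mu>_closed act_\<mu> as_i_rel)
qed

lemma As_action_As_\<mu>:
  assumes "m' \<in> carrier AsR" "m \<in> carrier AsR"
  shows "As_action m (As_\<mu> m') = inv\<^bsub>AsR\<^esub> m' \<otimes>\<^bsub>AsR\<^esub> m \<otimes>\<^bsub>AsR\<^esub> m'"
  using assms
proof (induction m' arbitrary: m rule: As_induct)
  case one thus ?case by (simp add: As_action_one)
next
  case (gen x m')
  have x: "iS (\<mu> x) \<in> carrier AsS" using gen.hyps(1) by (simp add: as_i_in_carrier \<mu>_closed)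
  have "As_action m (As_\<mu> (iR x \<otimes>\<^bsub>AsR\<^esub> m')) =
          As_action (As_action m (iS (\<mu> x))) (As_\<mu> m')"
    using gen x by (simp add: As_action_mult as_i_in_carrier As_\<mu>_as_i)
  thus ?case
    using gen by (simp add: As_action_closed gen.IH As_action_As_\<mu>_gen AsR.conj_mult_right
                            as_i_in_carrier)
next
  case (inv_gen x m')
  have x: "iS (\<mu> x) \<in> carrier AsS" using inv_gen.hyps(1) by (simp add: as_i_in_carrier \<mu>_closed)
  have "As_action m (inv\<^bsub>AsS\<^esub> iS (\<mu> x)) =
          inv\<^bsub>AsR\<^esub> (inv\<^bsub>AsR\<^esub> iR x) \<otimes>\<^bsub>AsR\<^esub> m \<otimes>\<^bsub>AsR\<^esub> inv\<^bsub>AsR\<^esub> iR x"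
    by (rule AsR.conj_inv_cancel)
       (use inv_gen x in \<open>simp_all add: As_action_closed as_i_in_carrier
                           As_action_As_\<mu>_gen[symmetric] As_action_mult As_action_one\<close>)
  moreover have "As_action m (As_\<mu> (inv\<^bsub>AsR\<^esub> iR x \<otimes>\<^bsub>AsR\<^esub> m')) =
                   As_action (As_action m (inv\<^bsub>AsS\<^esub> iS (\<mu> x))) (As_\<mu> m')"
    using inv_gen x by (simp add: As_action_mult as_i_in_carrier As_\<mu>_as_i)
  ultimately show ?case
    using inv_gen x by (simp add: As_action_closed inv_gen.IH AsR.conj_mult_right as_i_in_carrier)
qed

lemma As_crossed_module: "group_crossed_module AsR AsS As_\<mu> As_action"
  unfolding group_crossed_module_def
  by (simp add: As_group As_map_hom[OF morphism] As_action_hom As_action_bij As_action_one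
                As_action_mult As_\<mu>_As_action As_action_As_\<mu>)

end

theorem mainTheorem2:
  fixes R :: "'r set" and opR :: "'r \<Rightarrow> 'r \<Rightarrow> 'r"
    and S :: "'s set" and opS :: "'s \<Rightarrow> 's \<Rightarrow> 's"
    and \<mu> :: "'r \<Rightarrow> 's" and act :: "'r \<Rightarrow> 's \<Rightarrow> 'r"
  assumes "rack_crossed_module R opR S opS \<mu> act"
  shows "\<exists>\<phi>. (\<forall>r\<in>R. \<forall>s\<in>S. \<phi> (as_i R opR r) (as_i S opS s) = as_i R opR (act r s)) \<and>
             group_crossed_module (As R opR) (As S opS) (As_map R opR S opS \<mu>) \<phi>"
proof -
  interpret crossed_module_of_racks R opR S opS act \<mu>
    using assms by unfold_locales (simp_all add: rack_crossed_module_def)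
  show ?thesis
    using As_action_as_i As_crossed_module by blast
qed

end
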